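(* Let $P_{XY}$ be a probability distribution on finite $\mathcal X\times\mathcal Y$ with marginals $P_X,P_Y$. Then: (1) $U(X;Y)\ge0$, with equality if and only if $P_{XY}=P_X\times P_Y$. (2) $U(X;Y)<\infty$ if and only if there exists $y\in\mathcal Y$ such that for every $x\in\mathcal X$, either $P_{Y|X}(y|x)>0$ or $P_X(x)=0$. (3) If $X-Y-Z$ is a Markov chain (with $Z$ taking values in a finite set), then $U(X;Z)\le U(X;Y)$ and $U(X;Z)\le U(Y;Z)$.
   Context: $D(P\|Q)=\sum P\log(P/Q)$ ($0\log(0/q)=0$; $+\infty$ if $P\not\ll Q$). For a joint distribution $P_{AB}$ with $A$-marginal $P_A$, the umlaut information is $U(A;B)=\min_{Q_B}D(P_A\times Q_B\|P_{AB})$ (note the asymmetry: the first argument's marginal is kept). *)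

theory Defs
  imports "HOL-Analysis.Analysis" "HOL-Library.Extended_Real"
begin

definition is_dist :: "('a::finite \<Rightarrow> real) \<Rightarrow> bool" where
  "is_dist p \<longleftrightarrow> (\<forall>a. 0 \<le> p a) \<and> (\<Sum>a\<in>UNIV. p a) = 1"

definition KL :: "('a::finite \<Rightarrow> real) \<Rightarrow> ('a \<Rightarrow> real) \<Rightarrow> ereal" where
  "KL p q = (if \<exists>a. p a > 0 \<and> q a = 0 then \<infinity>
             else ereal (\<Sum>a\<in>UNIV. if p a = 0 then 0 else p a * ln (p a / q a)))"

definition marg1 :: "('a::finite \<times> 'b::finite \<Rightarrow> real) \<Rightarrow> 'a \<Rightarrow> real" where
  "marg1 P a = (\<Sum>b\<in>UNIV. P (a, b))"

definition marg2 :: "('a::finite \<times> 'b::finite \<Rightarrow> real) \<Rightarrow> 'b \<Rightarrow> real" where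
  "marg2 P b = (\<Sum>a\<in>UNIV. P (a, b))"

definition umlaut :: "('a::finite \<times> 'b::finite \<Rightarrow> real) \<Rightarrow> ereal" where
  "umlaut P = (INF Q \<in> {Q. is_dist Q}. KL (\<lambda>(a, b). marg1 P a * Q b) P)"

definition margXY :: "('x::finite \<times> 'y::finite \<times> 'z::finite \<Rightarrow> real) \<Rightarrow> 'x \<times> 'y \<Rightarrow> real" where
  "margXY P = (\<lambda>(x, y). \<Sum>z\<in>UNIV. P (x, y, z))"
definition margXZ :: "('x::finite \<times> 'y::finite \<times> 'z::finite \<Rightarrow> real) \<Rightarrow> 'x \<times> 'z \<Rightarrow> real" where
  "margXZ P = (\<lambda>(x, z). \<Sum>y\<in>UNIV. P (x, y, z))"
definition margYZ :: "('x::finite \<times> 'y::finite \<times> 'z::finite \<Rightarrow> real) \<Rightarrow> 'y \<times> 'z \<Rightarrow> real" where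
  "margYZ P = (\<lambda>(y, z). \<Sum>x\<in>UNIV. P (x, y, z))"

definition markov_chain :: "('x::finite \<times> 'y::finite \<times> 'z::finite \<Rightarrow> real) \<Rightarrow> bool" where
  "markov_chain P \<longleftrightarrow> (\<forall>x y z. P (x, y, z) * marg1 (margYZ P) y = margXY P (x, y) * margYZ P (y, z))"

end

(*
  Grouping the relative entropy by columns gives
  D(P_A x Q || P_AB) = sum_b Q(b) ln (Q(b) / w(b)), where w(b) = exp (sum_a P_A(a) ln P(b|a)),
  and w(b) = 0 if P(b|a) = 0 for some a with P_A(a) > 0. By the log-sum inequality
  U(A;B) = - ln (sum_b w(b)), attained at Q proportional to w. Hence U is finite iff some
  w(b) > 0, and by Gibbs' inequality U = 0 forces P_AB = P_A x Q for this Q, which is then P_B.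

  Under X - Y - Z, P_XZ arises from P_XY by the channel P(z|y) acting on the second
  coordinate, and from P_YZ by the channel P(x|y) acting on the first. Such channels map a
  product P_X x Q (resp. P_Y x Q) to a product with the new first marginal, so the data
  processing inequality for relative entropy yields both inequalities.
*)

theory Submission
  imports Defs
begin

definition kl_term :: "real \<Rightarrow> real \<Rightarrow> real" where
  "kl_term x y = (if x = 0 then 0 else x * ln (x / y))"

lemma sum_UNIV_prod:
  "(\<Sum>t\<in>(UNIV :: ('a::finite \<times> 'b::finite) set). g t) = (\<Sum>a\<in>UNIV. \<Sum>b\<in>UNIV. g (a, b))"
  by (subst sum.cartesian_product) simp

lemma kl_term_ge_tangent:
  assumes "0 \<le> a" "0 \<le> b" "0 < a \<Longrightarrow> 0 < b" "0 < A" "0 < B"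
  shows "a * ln (A / B) + a - b * A / B \<le> kl_term a b"
proof (cases "a = 0")
  case True
  then show ?thesis using assms by (simp add: kl_term_def)
next
  case False
  with assms have a: "0 < a" and b: "0 < b" by auto
  have "ln (b * A / (a * B)) \<le> b * A / (a * B) - 1"
    using a b assms by (intro ln_le_minus_one) simp
  then have "a * ln (b * A / (a * B)) \<le> a * (b * A / (a * B) - 1)"
    using a by (simp add: mult_left_mono)
  also have "\<dots> = b * A / B - a"
    using a by (simp add: field_simps)
  moreover have "ln (b * A / (a * B)) = ln (A / B) - ln (a / b)"
    using a b assms by (simp add: ln_div ln_mult)
  then have "a * ln (A / B) = a * ln (b * A / (a * B)) + a * ln (a / b)"
    by (simp add: distrib_left[symmetric])
  ultimately show ?thesis
    using False by (simp add: kl_term_def)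
qed

lemma kl_term_ge_diff:
  assumes "0 \<le> a" "0 \<le> b" "0 < a \<Longrightarrow> 0 < b"
  shows "a - b \<le> kl_term a b"
  using kl_term_ge_tangent[of a b 1 1] assms by simp

lemma kl_term_eq_diff_iff:
  assumes "0 \<le> a" "0 \<le> b" "0 < a \<Longrightarrow> 0 < b"
  shows "kl_term a b = a - b \<longleftrightarrow> a = b"
proof
  assume eq: "kl_term a b = a - b"
  show "a = b"
  proof (cases "a = 0")
    case True
    then show ?thesis using eq by (simp add: kl_term_def)
  next
    case False
    with assms have a: "0 < a" and b: "0 < b" by auto
    have "ln (b / a) = - ln (a / b)"
      using a b by (simp add: ln_div)
    with eq False a have "ln (b / a) = b / a - 1"
      by (simp add: kl_term_def field_simps)
    then have "b / a = 1"
      using a b by (intro ln_eq_minus_one) auto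
    then show ?thesis using a by simp
  qed
qed (simp add: kl_term_def)

lemma kl_term_scale: "0 \<le> k \<Longrightarrow> kl_term (x * k) (y * k) = k * kl_term x y"
  by (cases "k = 0") (auto simp: kl_term_def)

lemma kl_term_mult_right:
  assumes "0 < q" "0 \<le> p" "0 < p \<Longrightarrow> 0 < r"
  shows "kl_term (p * q) r = q * kl_term p r + p * q * ln q"
proof (cases "p = 0")
  case False
  with assms have "ln (p * q / r) = ln (p / r) + ln q"
    by (simp add: ln_div ln_mult)
  with False assms show ?thesis
    by (simp add: kl_term_def algebra_simps)
qed (simp add: kl_term_def)

lemma log_sum_inequality:
  assumes "finite S" "\<And>i. i \<in> S \<Longrightarrow> 0 \<le> a i" "\<And>i. i \<in> S \<Longrightarrow> 0 \<le> b i"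
    and "\<And>i. i \<in> S \<Longrightarrow> 0 < a i \<Longrightarrow> 0 < b i"
  shows "kl_term (\<Sum>i\<in>S. a i) (\<Sum>i\<in>S. b i) \<le> (\<Sum>i\<in>S. kl_term (a i) (b i))"
proof (cases "\<exists>j\<in>S. 0 < a j")
  case False
  with assms(2) have "\<forall>i\<in>S. a i = 0" by force
  then show ?thesis by (simp add: kl_term_def)
next
  case True
  then obtain j where j: "j \<in> S" "0 < a j" by blast
  define A where "A = (\<Sum>i\<in>S. a i)"
  define B where "B = (\<Sum>i\<in>S. b i)"
  have "a j \<le> A" "b j \<le> B"
    unfolding A_def B_def using assms j by (auto intro: member_le_sum)
  moreover have "0 < b j" using assms j by blast
  ultimately have A: "0 < A" and B: "0 < B" using j by linarith+
  have "(\<Sum>i\<in>S. b i * A / B) = A"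
    using B by (simp add: sum_divide_distrib[symmetric] sum_distrib_right[symmetric] B_def)
  then have "kl_term A B = (\<Sum>i\<in>S. a i * ln (A / B) + a i - b i * A / B)"
    using A by (simp add: kl_term_def sum.distrib sum_subtractf A_def sum_distrib_right)
  also have "\<dots> \<le> (\<Sum>i\<in>S. kl_term (a i) (b i))"
    using assms A B by (intro sum_mono kl_term_ge_tangent) auto
  finally show ?thesis by (simp add: A_def B_def)
qed

lemma KL_eq_sum:
  "(\<And>a. 0 < p a \<Longrightarrow> q a \<noteq> 0) \<Longrightarrow> KL p q = ereal (\<Sum>a\<in>UNIV. kl_term (p a) (q a))"
  by (auto simp: KL_def kl_term_def)

lemma KL_eq_infinity: "0 < p a \<Longrightarrow> q a = 0 \<Longrightarrow> KL p q = \<infinity>"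
  by (auto simp: KL_def)

lemma KL_nonneg:
  assumes "is_dist p" "is_dist q"
  shows "0 \<le> KL p q"
proof (cases "\<exists>a. 0 < p a \<and> q a = 0")
  case True
  then show ?thesis by (auto simp: KL_def)
next
  case False
  with assms have "kl_term (\<Sum>a\<in>UNIV. p a) (\<Sum>a\<in>UNIV. q a) \<le> (\<Sum>a\<in>UNIV. kl_term (p a) (q a))"
    unfolding is_dist_def by (intro log_sum_inequality) (auto simp: order_less_le)
  with assms False show ?thesis
    by (simp add: KL_eq_sum is_dist_def kl_term_def)
qed

lemma KL_eq_0_iff:
  assumes p: "is_dist p" and q: "is_dist q"
  shows "KL p q = 0 \<longleftrightarrow> p = q"
proof
  assume KL0: "KL p q = 0"
  then have abs: "0 < p a \<Longrightarrow> 0 < q a" for a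
    using q by (auto simp: KL_def is_dist_def order_less_le split: if_splits)
  have p0: "0 \<le> p a" and q0: "0 \<le> q a" for a
    using p q by (auto simp: is_dist_def)
  define d where "d a = kl_term (p a) (q a) - (p a - q a)" for a
  have "KL p q = ereal (\<Sum>a\<in>UNIV. kl_term (p a) (q a))"
    using abs by (intro KL_eq_sum) (metis less_irrefl)
  then have "(\<Sum>a\<in>UNIV. kl_term (p a) (q a)) = 0"
    using KL0 by (simp add: zero_ereal_def)
  then have "(\<Sum>a\<in>UNIV. d a) = 0"
    using p q by (simp add: d_def sum_subtractf is_dist_def)
  moreover have "0 \<le> d a" for a
    using kl_term_ge_diff[OF p0 q0 abs] by (simp add: d_def)
  ultimately have "d a = 0" for a
    using sum_nonneg_eq_0_iff[of UNIV d] by simp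
  then show "p = q"
    using kl_term_eq_diff_iff[OF p0 q0 abs] by (auto simp: d_def)
next
  assume "p = q"
  have "(\<Sum>a\<in>UNIV. kl_term (q a) (q a)) = 0"
    by (intro sum.neutral) (simp add: kl_term_def)
  moreover have "KL q q = ereal (\<Sum>a\<in>UNIV. kl_term (q a) (q a))"
    by (rule KL_eq_sum) simp
  ultimately show "KL p q = 0"
    using \<open>p = q\<close> by (simp add: zero_ereal_def)
qed

definition stochastic :: "('a \<Rightarrow> 'b::finite \<Rightarrow> real) \<Rightarrow> bool" where
  "stochastic K \<longleftrightarrow> (\<forall>a b. 0 \<le> K a b) \<and> (\<forall>a. (\<Sum>b\<in>UNIV. K a b) = 1)"

definition push_kernel :: "('a::finite \<Rightarrow> 'b \<Rightarrow> real) \<Rightarrow> ('a \<Rightarrow> real) \<Rightarrow> 'b \<Rightarrow> real" where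
  "push_kernel K p b = (\<Sum>a\<in>UNIV. p a * K a b)"

lemma is_dist_push_kernel:
  assumes K: "stochastic K" and p: "is_dist p"
  shows "is_dist (push_kernel K p)"
proof -
  have "(\<Sum>b\<in>UNIV. push_kernel K p b) = (\<Sum>a\<in>UNIV. p a * (\<Sum>b\<in>UNIV. K a b))"
    unfolding push_kernel_def by (subst sum.swap) (simp add: sum_distrib_left)
  also have "\<dots> = 1"
    using K p by (simp add: stochastic_def is_dist_def)
  moreover have "0 \<le> push_kernel K p b" for b
    using K p unfolding push_kernel_def stochastic_def is_dist_def by (simp add: sum_nonneg)
  ultimately show ?thesis
    by (simp add: is_dist_def)
qed

lemma KL_push_kernel_le:
  assumes K: "stochastic K" and p0: "\<forall>a. 0 \<le> p a" and q0: "\<forall>a. 0 \<le> q a"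
  shows "KL (push_kernel K p) (push_kernel K q) \<le> KL p q"
proof (cases "\<exists>a. 0 < p a \<and> q a = 0")
  case True
  then show ?thesis by (simp add: KL_def)
next
  case False
  have K0: "0 \<le> K a b" for a b
    using K by (simp add: stochastic_def)
  have abs: "0 < q a * K a b" if "0 < p a * K a b" for a b
  proof -
    have "p a \<noteq> 0" "K a b \<noteq> 0"
      using that by auto
    then have "0 < p a" "0 < K a b"
      using p0 K0[of a b] by (auto simp: order_less_le)
    moreover have "q a \<noteq> 0"
      using False \<open>0 < p a\<close> by blast
    ultimately show ?thesis
      using q0 by (simp add: order_less_le)
  qed
  have abs': "push_kernel K q b \<noteq> 0" if "0 < push_kernel K p b" for b
  proof -
    have "\<not> (\<forall>a. p a * K a b \<le> 0)"
      using that sum_nonpos[of UNIV "\<lambda>a. p a * K a b"] by (auto simp: push_kernel_def)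
    then obtain a where "0 < p a * K a b"
      by (auto simp: not_le)
    then have "0 < q a * K a b" by (rule abs)
    also have "\<dots> \<le> push_kernel K q b"
      unfolding push_kernel_def using q0 K0 by (intro member_le_sum) auto
    finally show ?thesis by simp
  qed
  have "(\<Sum>b\<in>UNIV. kl_term (push_kernel K p b) (push_kernel K q b))
      \<le> (\<Sum>b\<in>UNIV. \<Sum>a\<in>UNIV. kl_term (p a * K a b) (q a * K a b))"
    unfolding push_kernel_def by (intro sum_mono log_sum_inequality) (simp_all add: p0 q0 K0 abs)
  also have "\<dots> = (\<Sum>a\<in>UNIV. (\<Sum>b\<in>UNIV. K a b) * kl_term (p a) (q a))"
    using K0 by (subst sum.swap) (simp add: kl_term_scale sum_distrib_right)
  also have "\<dots> = (\<Sum>a\<in>UNIV. kl_term (p a) (q a))"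
    using K by (simp add: stochastic_def)
  finally have "(\<Sum>b\<in>UNIV. kl_term (push_kernel K p b) (push_kernel K q b))
      \<le> (\<Sum>a\<in>UNIV. kl_term (p a) (q a))" .
  moreover have "KL p q = ereal (\<Sum>a\<in>UNIV. kl_term (p a) (q a))"
    using False by (intro KL_eq_sum) auto
  moreover have "KL (push_kernel K p) (push_kernel K q)
      = ereal (\<Sum>b\<in>UNIV. kl_term (push_kernel K p b) (push_kernel K q b))"
    using abs' by (rule KL_eq_sum)
  ultimately show ?thesis by simp
qed

definition kernel_fst :: "('a \<Rightarrow> 'c \<Rightarrow> real) \<Rightarrow> 'a \<times> 'b \<Rightarrow> 'c \<times> 'b \<Rightarrow> real" where
  "kernel_fst k = (\<lambda>(a, b) (c, b'). if b' = b then k a c else 0)"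

definition kernel_snd :: "('b \<Rightarrow> 'c \<Rightarrow> real) \<Rightarrow> 'a \<times> 'b \<Rightarrow> 'a \<times> 'c \<Rightarrow> real" where
  "kernel_snd k = (\<lambda>(a, b) (a', c). if a' = a then k b c else 0)"

lemma push_kernel_fst:
  "push_kernel (kernel_fst k) P (c, b) = (\<Sum>a\<in>UNIV. P (a, b) * k a c)"
proof -
  have "push_kernel (kernel_fst k) P (c, b)
      = (\<Sum>a\<in>UNIV. \<Sum>b'\<in>UNIV. if b' = b then P (a, b') * k a c else 0)"
    unfolding push_kernel_def kernel_fst_def sum_UNIV_prod by (intro sum.cong refl) auto
  then show ?thesis by simp
qed

lemma push_kernel_snd:
  "push_kernel (kernel_snd k) P (a, c) = (\<Sum>b\<in>UNIV. P (a, b) * k b c)"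
proof -
  have "push_kernel (kernel_snd k) P (a, c)
      = (\<Sum>a'\<in>UNIV. if a' = a then \<Sum>b\<in>UNIV. P (a', b) * k b c else 0)"
    unfolding push_kernel_def kernel_snd_def sum_UNIV_prod by (intro sum.cong refl) auto
  then show ?thesis by simp
qed

lemma stochastic_kernel_fst: "stochastic k \<Longrightarrow> stochastic (kernel_fst k)"
  by (auto simp: stochastic_def kernel_fst_def sum_UNIV_prod)

lemma stochastic_kernel_snd:
  fixes k :: "'b \<Rightarrow> 'c::finite \<Rightarrow> real"
  assumes "stochastic k"
  shows "stochastic (kernel_snd k :: 'a::finite \<times> 'b \<Rightarrow> _)"
proof -
  have "(\<Sum>t\<in>UNIV. kernel_snd k (a, b) t) = (\<Sum>c\<in>UNIV. k b c)" for a :: 'a and b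
    by (simp add: kernel_snd_def sum_UNIV_prod) (subst sum.swap, simp)
  with assms show ?thesis
    by (auto simp: stochastic_def kernel_snd_def)
qed

lemma is_dist_prod:
  assumes "is_dist p" "is_dist q"
  shows "is_dist (\<lambda>(a, b). p a * q b)"
  using assms by (auto simp: is_dist_def sum_UNIV_prod sum_distrib_left[symmetric])

lemma is_dist_marg1: "is_dist P \<Longrightarrow> is_dist (marg1 P)"
  by (auto simp: is_dist_def marg1_def sum_UNIV_prod intro: sum_nonneg)

lemma marg1_nonneg: "\<forall>t. 0 \<le> P t \<Longrightarrow> 0 \<le> marg1 P a"
  by (simp add: marg1_def sum_nonneg)

lemma umlaut_push_kernel_le:
  fixes K :: "'a::finite \<times> 'b::finite \<Rightarrow> 'c::finite \<times> 'd::finite \<Rightarrow> real"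
  assumes K: "stochastic K" and P0: "\<forall>t. 0 \<le> P t"
    and prod: "\<And>Q. is_dist Q \<Longrightarrow> \<exists>Q'. is_dist Q' \<and>
      push_kernel K (\<lambda>(a, b). marg1 P a * Q b) = (\<lambda>(c, d). marg1 (push_kernel K P) c * Q' d)"
  shows "umlaut (push_kernel K P) \<le> umlaut P"
  unfolding umlaut_def
proof (rule INF_greatest)
  fix Q :: "'b \<Rightarrow> real"
  assume "Q \<in> {Q. is_dist Q}"
  then have Q: "is_dist Q" by simp
  with prod obtain Q' where Q': "is_dist Q'"
    and push: "push_kernel K (\<lambda>(a, b). marg1 P a * Q b) = (\<lambda>(c, d). marg1 (push_kernel K P) c * Q' d)"
    by blast
  have "\<forall>t. 0 \<le> (\<lambda>(a, b). marg1 P a * Q b) t"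
    using P0 Q by (auto simp: is_dist_def marg1_nonneg)
  from KL_push_kernel_le[OF K this P0]
  have "KL (\<lambda>(c, d). marg1 (push_kernel K P) c * Q' d) (push_kernel K P)
      \<le> KL (\<lambda>(a, b). marg1 P a * Q b) P"
    unfolding push .
  with Q' show "(INF Q'\<in>{Q. is_dist Q}. KL (\<lambda>(c, d). marg1 (push_kernel K P) c * Q' d) (push_kernel K P))
      \<le> KL (\<lambda>(a, b). marg1 P a * Q b) P"
    by (blast intro: INF_lower2)
qed

lemma umlaut_push_kernel_fst_le:
  fixes k :: "'a::finite \<Rightarrow> 'c::finite \<Rightarrow> real" and P :: "'a \<times> 'b::finite \<Rightarrow> real"
  assumes k: "stochastic k" and P0: "\<forall>t. 0 \<le> P t"
  shows "umlaut (push_kernel (kernel_fst k) P) \<le> umlaut P"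
proof (rule umlaut_push_kernel_le[OF stochastic_kernel_fst[OF k] P0])
  fix Q :: "'b \<Rightarrow> real"
  assume "is_dist Q"
  have "marg1 (push_kernel (kernel_fst k) P) c = (\<Sum>a\<in>UNIV. (\<Sum>b\<in>UNIV. P (a, b)) * k a c)" for c
    by (simp add: marg1_def push_kernel_fst sum_distrib_right) (rule sum.swap)
  then have "marg1 (push_kernel (kernel_fst k) P) = push_kernel k (marg1 P)"
    by (simp add: fun_eq_iff push_kernel_def marg1_def)
  moreover have "push_kernel (kernel_fst k) (\<lambda>(a, b). marg1 P a * Q b) (c, b)
      = push_kernel k (marg1 P) c * Q b" for c b
    unfolding push_kernel_fst by (simp add: push_kernel_def sum_distrib_right) (simp add: ac_simps)
  ultimately have "push_kernel (kernel_fst k) (\<lambda>(a, b). marg1 P a * Q b)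
      = (\<lambda>(c, b). marg1 (push_kernel (kernel_fst k) P) c * Q b)"
    by (simp add: fun_eq_iff)
  with \<open>is_dist Q\<close> show "\<exists>Q'. is_dist Q' \<and> push_kernel (kernel_fst k) (\<lambda>(a, b). marg1 P a * Q b)
      = (\<lambda>(c, d). marg1 (push_kernel (kernel_fst k) P) c * Q' d)"
    by blast
qed

lemma umlaut_push_kernel_snd_le:
  fixes k :: "'b::finite \<Rightarrow> 'c::finite \<Rightarrow> real" and P :: "'a::finite \<times> 'b \<Rightarrow> real"
  assumes k: "stochastic k" and P0: "\<forall>t. 0 \<le> P t"
  shows "umlaut (push_kernel (kernel_snd k) P) \<le> umlaut P"
proof (rule umlaut_push_kernel_le[OF stochastic_kernel_snd[OF k] P0])
  fix Q :: "'b \<Rightarrow> real"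
  assume "is_dist Q"
  have "marg1 (push_kernel (kernel_snd k) P) a = marg1 P a" for a
  proof -
    have "marg1 (push_kernel (kernel_snd k) P) a = (\<Sum>b\<in>UNIV. P (a, b) * (\<Sum>c\<in>UNIV. k b c))"
      by (simp add: marg1_def push_kernel_snd sum_distrib_left) (rule sum.swap)
    then show ?thesis
      using k by (simp add: stochastic_def marg1_def)
  qed
  moreover have "push_kernel (kernel_snd k) (\<lambda>(a, b). marg1 P a * Q b) (a, c)
      = marg1 P a * push_kernel k Q c" for a c
    unfolding push_kernel_snd by (simp add: push_kernel_def sum_distrib_left) (simp add: ac_simps)
  ultimately have "push_kernel (kernel_snd k) (\<lambda>(a, b). marg1 P a * Q b)
      = (\<lambda>(a, c). marg1 (push_kernel (kernel_snd k) P) a * push_kernel k Q c)"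
    by (simp add: fun_eq_iff)
  with \<open>is_dist Q\<close> k show "\<exists>Q'. is_dist Q' \<and> push_kernel (kernel_snd k) (\<lambda>(a, b). marg1 P a * Q b)
      = (\<lambda>(c, d). marg1 (push_kernel (kernel_snd k) P) c * Q' d)"
    by (blast intro: is_dist_push_kernel)
qed

text \<open>On a null row the conditional law is replaced by an arbitrary point mass, so that the
  kernel is stochastic everywhere.\<close>
definition cond_kernel :: "('a::finite \<times> 'b::finite \<Rightarrow> real) \<Rightarrow> 'a \<Rightarrow> 'b \<Rightarrow> real" where
  "cond_kernel P a b = (if marg1 P a = 0 then of_bool (b = undefined) else P (a, b) / marg1 P a)"

lemma le_marg1: "\<forall>t. 0 \<le> P t \<Longrightarrow> P (a, b) \<le> marg1 P a"
  unfolding marg1_def by (rule member_le_sum) auto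

lemma stochastic_cond_kernel:
  assumes "\<forall>t. 0 \<le> P t"
  shows "stochastic (cond_kernel P)"
proof -
  have "(\<Sum>b\<in>UNIV. cond_kernel P a b) = 1" for a
    by (cases "marg1 P a = 0")
      (simp_all add: cond_kernel_def sum_divide_distrib[symmetric] marg1_def[symmetric])
  moreover have "0 \<le> cond_kernel P a b" for a b
    using assms marg1_nonneg[OF assms] by (simp add: cond_kernel_def)
  ultimately show ?thesis
    by (simp add: stochastic_def)
qed

lemma margXY_nonneg: "\<forall>t. 0 \<le> R t \<Longrightarrow> \<forall>t. 0 \<le> margXY R t"
  by (auto simp: margXY_def intro: sum_nonneg)

lemma margYZ_nonneg: "\<forall>t. 0 \<le> R t \<Longrightarrow> \<forall>t. 0 \<le> margYZ R t"
  by (auto simp: margYZ_def intro: sum_nonneg)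

lemma marg1_margXY_swap: "marg1 (\<lambda>(y, x). margXY R (x, y)) = marg1 (margYZ R)"
  by (simp add: fun_eq_iff marg1_def margXY_def margYZ_def) (intro allI sum.swap)

lemma marg1_margYZ_eq_0:
  assumes "\<forall>t. 0 \<le> R t" "marg1 (margYZ R) y = 0"
  shows "R (x, y, z) = 0"
proof -
  have "R (x, y, z) \<le> margYZ R (y, z)"
    unfolding margYZ_def using assms(1) by (auto intro: member_le_sum)
  also have "\<dots> \<le> marg1 (margYZ R) y"
    using le_marg1[OF margYZ_nonneg[OF assms(1)]] .
  finally show ?thesis
    using assms by (simp add: order_antisym)
qed

lemma markov_chain_margXY_cond:
  assumes R0: "\<forall>t. 0 \<le> R t" and "markov_chain R"
  shows "margXY R (x, y) * cond_kernel (margYZ R) y z = R (x, y, z)"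
proof (cases "marg1 (margYZ R) y = 0")
  case True
  then show ?thesis
    using marg1_margYZ_eq_0[OF R0] by (simp add: margXY_def)
next
  case False
  then show ?thesis
    using assms by (simp add: markov_chain_def cond_kernel_def field_simps)
qed

lemma markov_chain_margYZ_cond:
  assumes R0: "\<forall>t. 0 \<le> R t" and "markov_chain R"
  shows "margYZ R (y, z) * cond_kernel (\<lambda>(y, x). margXY R (x, y)) y x = R (x, y, z)"
proof (cases "marg1 (margYZ R) y = 0")
  case True
  then show ?thesis
    using marg1_margYZ_eq_0[OF R0] by (simp add: margYZ_def)
next
  case False
  then show ?thesis
    using assms by (simp add: markov_chain_def cond_kernel_def marg1_margXY_swap field_simps)
qed

lemma umlaut_margXZ_le_margXY:
  assumes "\<forall>t. 0 \<le> R t" "markov_chain R"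
  shows "umlaut (margXZ R) \<le> umlaut (margXY R)"
proof -
  have "margXZ R = push_kernel (kernel_snd (cond_kernel (margYZ R))) (margXY R)"
    using markov_chain_margXY_cond[OF assms]
    by (simp add: fun_eq_iff push_kernel_snd margXZ_def)
  then show ?thesis
    using assms by (simp add: umlaut_push_kernel_snd_le stochastic_cond_kernel margXY_nonneg margYZ_nonneg)
qed

lemma umlaut_margXZ_le_margYZ:
  assumes "\<forall>t. 0 \<le> R t" "markov_chain R"
  shows "umlaut (margXZ R) \<le> umlaut (margYZ R)"
proof -
  have "\<forall>t. 0 \<le> (\<lambda>(y, x). margXY R (x, y)) t"
    using margXY_nonneg[OF assms(1)] by auto
  moreover have "margXZ R = push_kernel (kernel_fst (cond_kernel (\<lambda>(y, x). margXY R (x, y)))) (margYZ R)"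
    using markov_chain_margYZ_cond[OF assms]
    by (simp add: fun_eq_iff push_kernel_fst margXZ_def)
  ultimately show ?thesis
    using assms by (simp add: umlaut_push_kernel_fst_le stochastic_cond_kernel margYZ_nonneg)
qed

definition cond_positive :: "('a::finite \<times> 'b::finite \<Rightarrow> real) \<Rightarrow> 'b \<Rightarrow> bool" where
  "cond_positive P b \<longleftrightarrow> (\<forall>a. 0 < marg1 P a \<longrightarrow> 0 < P (a, b))"

text \<open>The weight exp (E ln P(b|A)) of the paper, written with kl_term; it vanishes exactly on
  the columns b for which some P(b|a) with P(a) > 0 is zero.\<close>
definition umlaut_weight :: "('a::finite \<times> 'b::finite \<Rightarrow> real) \<Rightarrow> 'b \<Rightarrow> real" where
  "umlaut_weight P b =
     (if cond_positive P b then exp (- (\<Sum>a\<in>UNIV. kl_term (marg1 P a) (P (a, b)))) else 0)"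

definition umlaut_minimizer :: "('a::finite \<times> 'b::finite \<Rightarrow> real) \<Rightarrow> 'b \<Rightarrow> real" where
  "umlaut_minimizer P b = umlaut_weight P b / (\<Sum>b'\<in>UNIV. umlaut_weight P b')"

lemma cond_positive_iff:
  assumes "\<forall>t. 0 \<le> P t"
  shows "cond_positive P b \<longleftrightarrow> (\<forall>a. 0 < P (a, b) / marg1 P a \<or> marg1 P a = 0)"
  using assms marg1_nonneg[OF assms]
  by (auto simp: cond_positive_def zero_less_divide_iff order_less_le)

context
  fixes P :: "'a::finite \<times> 'b::finite \<Rightarrow> real"
  assumes P: "is_dist P"
begin

lemma is_dist_nonneg: "\<forall>t. 0 \<le> P t"
  using P by (simp add: is_dist_def)

lemma sum_marg1_eq_1: "(\<Sum>a\<in>UNIV. marg1 P a) = 1"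
  using P by (simp add: is_dist_def marg1_def sum_UNIV_prod)

lemma KL_prod_eq_infinity:
  assumes "0 < Q b" "\<not> cond_positive P b"
  shows "KL (\<lambda>(a, b). marg1 P a * Q b) P = \<infinity>"
proof -
  obtain a where a: "0 < marg1 P a" "\<not> 0 < P (a, b)"
    using assms(2) by (auto simp: cond_positive_def)
  then have "P (a, b) = 0"
    using is_dist_nonneg by (simp add: order_less_le)
  moreover have "0 < marg1 P a * Q b"
    using a assms(1) by simp
  ultimately show ?thesis
    by (intro KL_eq_infinity[of _ "(a, b)"]) simp_all
qed

lemma sum_kl_term_column:
  assumes "cond_positive P b" "0 < q"
  shows "(\<Sum>a\<in>UNIV. kl_term (marg1 P a * q) (P (a, b))) = kl_term q (umlaut_weight P b)"
proof -
  define S where "S = (\<Sum>a\<in>UNIV. kl_term (marg1 P a) (P (a, b)))"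
  have "(\<Sum>a\<in>UNIV. kl_term (marg1 P a * q) (P (a, b)))
      = (\<Sum>a\<in>UNIV. q * kl_term (marg1 P a) (P (a, b)) + marg1 P a * q * ln q)"
    using assms marg1_nonneg[OF is_dist_nonneg]
    by (intro sum.cong refl kl_term_mult_right) (auto simp: cond_positive_def)
  also have "\<dots> = q * (ln q + S)"
    by (simp add: S_def sum.distrib sum_distrib_left[symmetric] sum_distrib_right[symmetric]
        sum_marg1_eq_1 algebra_simps)
  also have "\<dots> = kl_term q (umlaut_weight P b)"
    using assms by (simp add: kl_term_def umlaut_weight_def S_def ln_div)
  finally show ?thesis .
qed

lemma KL_prod_eq_sum:
  assumes Q: "is_dist Q" and supp: "\<forall>b. 0 < Q b \<longrightarrow> cond_positive P b"
  shows "KL (\<lambda>(a, b). marg1 P a * Q b) P = ereal (\<Sum>b\<in>UNIV. kl_term (Q b) (umlaut_weight P b))"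
proof -
  have Q0: "0 \<le> Q b" for b
    using Q by (simp add: is_dist_def)
  have "P (a, b) \<noteq> 0" if "0 < marg1 P a * Q b" for a b
  proof -
    have "0 < marg1 P a" "0 < Q b"
      using that marg1_nonneg[OF is_dist_nonneg, of a] Q0[of b] by (auto simp: zero_less_mult_iff)
    with supp have "0 < P (a, b)"
      by (simp add: cond_positive_def)
    then show ?thesis by simp
  qed
  then have "KL (\<lambda>(a, b). marg1 P a * Q b) P
      = ereal (\<Sum>b\<in>UNIV. \<Sum>a\<in>UNIV. kl_term (marg1 P a * Q b) (P (a, b)))"
    by (subst KL_eq_sum) (auto simp: sum_UNIV_prod intro: sum.swap)
  also have "(\<Sum>b\<in>UNIV. \<Sum>a\<in>UNIV. kl_term (marg1 P a * Q b) (P (a, b)))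
      = (\<Sum>b\<in>UNIV. kl_term (Q b) (umlaut_weight P b))"
  proof (intro sum.cong refl)
    fix b
    show "(\<Sum>a\<in>UNIV. kl_term (marg1 P a * Q b) (P (a, b))) = kl_term (Q b) (umlaut_weight P b)"
    proof (cases "Q b = 0")
      case False
      with Q0[of b] supp show ?thesis
        by (intro sum_kl_term_column) (auto simp: order_less_le)
    qed (simp add: kl_term_def)
  qed
  finally show ?thesis .
qed

lemma umlaut_eq_infinity:
  assumes "\<forall>b. \<not> cond_positive P b"
  shows "umlaut P = \<infinity>"
  unfolding umlaut_def
proof (rule antisym[OF _ INF_greatest])
  fix Q :: "'b \<Rightarrow> real"
  assume "Q \<in> {Q. is_dist Q}"
  then have "\<not> (\<forall>b. Q b \<le> 0)"
    using sum_nonpos[of UNIV Q] by (auto simp: is_dist_def)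
  then obtain b where "0 < Q b"
    by (auto simp: not_le)
  with assms show "\<infinity> \<le> KL (\<lambda>(a, b). marg1 P a * Q b) P"
    by (simp add: KL_prod_eq_infinity)
qed simp

context
  assumes positive: "\<exists>b. cond_positive P b"
begin

lemma sum_umlaut_weight_pos: "0 < (\<Sum>b\<in>UNIV. umlaut_weight P b)"
proof -
  obtain b where "cond_positive P b"
    using positive by blast
  then have "0 < umlaut_weight P b"
    by (simp add: umlaut_weight_def)
  also have "\<dots> \<le> (\<Sum>b\<in>UNIV. umlaut_weight P b)"
    by (rule member_le_sum) (simp_all add: umlaut_weight_def)
  finally show ?thesis .
qed

lemma is_dist_umlaut_minimizer: "is_dist (umlaut_minimizer P)"
  using sum_umlaut_weight_pos
  by (simp add: is_dist_def umlaut_minimizer_def umlaut_weight_def sum_divide_distrib[symmetric])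

lemma KL_prod_ge:
  assumes Q: "is_dist Q"
  shows "ereal (- ln (\<Sum>b\<in>UNIV. umlaut_weight P b)) \<le> KL (\<lambda>(a, b). marg1 P a * Q b) P"
proof (cases "\<forall>b. 0 < Q b \<longrightarrow> cond_positive P b")
  case True
  have "kl_term (\<Sum>b\<in>UNIV. Q b) (\<Sum>b\<in>UNIV. umlaut_weight P b)
      \<le> (\<Sum>b\<in>UNIV. kl_term (Q b) (umlaut_weight P b))"
    using Q True by (intro log_sum_inequality) (auto simp: is_dist_def umlaut_weight_def)
  then show ?thesis
    using Q True sum_umlaut_weight_pos by (simp add: KL_prod_eq_sum is_dist_def kl_term_def ln_div)
qed (auto simp: KL_prod_eq_infinity)

lemma KL_prod_umlaut_minimizer:
  "KL (\<lambda>(a, b). marg1 P a * umlaut_minimizer P b) P = ereal (- ln (\<Sum>b\<in>UNIV. umlaut_weight P b))"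
proof -
  let ?Z = "\<Sum>b\<in>UNIV. umlaut_weight P b"
  have "kl_term (umlaut_minimizer P b) (umlaut_weight P b) = umlaut_minimizer P b * - ln ?Z" for b
    using sum_umlaut_weight_pos
    by (cases "umlaut_weight P b = 0") (simp_all add: kl_term_def umlaut_minimizer_def ln_div)
  then have "(\<Sum>b\<in>UNIV. kl_term (umlaut_minimizer P b) (umlaut_weight P b)) = - ln ?Z"
    using is_dist_umlaut_minimizer by (simp add: sum_negf sum_distrib_right[symmetric] is_dist_def)
  moreover have "\<forall>b. 0 < umlaut_minimizer P b \<longrightarrow> cond_positive P b"
    by (simp add: umlaut_minimizer_def umlaut_weight_def)
  ultimately show ?thesis
    using is_dist_umlaut_minimizer by (simp add: KL_prod_eq_sum)
qed

lemma umlaut_eq_minus_ln: "umlaut P = ereal (- ln (\<Sum>b\<in>UNIV. umlaut_weight P b))"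
  unfolding umlaut_def
proof (rule antisym)
  show "(INF Q\<in>{Q. is_dist Q}. KL (\<lambda>(a, b). marg1 P a * Q b) P)
      \<le> ereal (- ln (\<Sum>b\<in>UNIV. umlaut_weight P b))"
    using is_dist_umlaut_minimizer KL_prod_umlaut_minimizer by (auto intro!: INF_lower2)
qed (auto intro: INF_greatest KL_prod_ge)

lemma umlaut_attained: "umlaut P = KL (\<lambda>(a, b). marg1 P a * umlaut_minimizer P b) P"
  by (simp add: umlaut_eq_minus_ln KL_prod_umlaut_minimizer)

end

lemma umlaut_nonneg: "0 \<le> umlaut P"
  unfolding umlaut_def
  using P by (auto intro!: INF_greatest KL_nonneg is_dist_prod is_dist_marg1)

lemma umlaut_less_infinity_iff: "umlaut P < \<infinity> \<longleftrightarrow> (\<exists>b. cond_positive P b)"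
  using umlaut_eq_infinity umlaut_eq_minus_ln by force

lemma umlaut_eq_0_iff: "umlaut P = 0 \<longleftrightarrow> (\<forall>a b. P (a, b) = marg1 P a * marg2 P b)"
proof
  assume U: "umlaut P = 0"
  then have positive: "\<exists>b. cond_positive P b"
    using umlaut_eq_infinity by force
  let ?W = "umlaut_minimizer P"
  have "(\<lambda>(a, b). marg1 P a * ?W b) = P"
    using U umlaut_attained[OF positive] is_dist_umlaut_minimizer[OF positive] P
    by (simp add: KL_eq_0_iff is_dist_prod is_dist_marg1)
  then have factor: "P (a, b) = marg1 P a * ?W b" for a b
    by (auto simp: fun_eq_iff)
  then have "marg2 P b = ?W b" for b
    by (simp add: marg2_def sum_distrib_right[symmetric] sum_marg1_eq_1)
  with factor show "\<forall>a b. P (a, b) = marg1 P a * marg2 P b"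
    by simp
next
  assume indep: "\<forall>a b. P (a, b) = marg1 P a * marg2 P b"
  have "(\<Sum>b\<in>UNIV. marg2 P b) = (\<Sum>a\<in>UNIV. marg1 P a)"
    unfolding marg1_def marg2_def by (rule sum.swap)
  then have "is_dist (marg2 P)"
    using is_dist_nonneg by (auto simp: is_dist_def sum_marg1_eq_1 marg2_def intro: sum_nonneg)
  then have "umlaut P \<le> KL (\<lambda>(a, b). marg1 P a * marg2 P b) P"
    unfolding umlaut_def by (auto intro: INF_lower)
  also have "(\<lambda>(a, b). marg1 P a * marg2 P b) = P"
    using indep by auto
  finally show "umlaut P = 0"
    using umlaut_nonneg KL_eq_0_iff[OF P P] by simp
qed

end

theorem mainTheorem10:
  fixes P :: "'x::finite \<times> 'y::finite \<Rightarrow> real"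
    and R :: "'x::finite \<times> 'y::finite \<times> 'z::finite \<Rightarrow> real"
  shows "(is_dist P \<longrightarrow>
            0 \<le> umlaut P \<and>
            (umlaut P = 0 \<longleftrightarrow> (\<forall>x y. P (x, y) = marg1 P x * marg2 P y)) \<and>
            (umlaut P < \<infinity> \<longleftrightarrow>
               (\<exists>y. \<forall>x. P (x, y) / marg1 P x > 0 \<or> marg1 P x = 0)))
       \<and> (is_dist R \<and> markov_chain R \<longrightarrow>
            umlaut (margXZ R) \<le> umlaut (margXY R) \<and>
            umlaut (margXZ R) \<le> umlaut (margYZ R))"
proof (intro conjI impI)
  assume P: "is_dist P"
  show "0 \<le> umlaut P"
    using P by (rule umlaut_nonneg)
  show "umlaut P = 0 \<longleftrightarrow> (\<forall>x y. P (x, y) = marg1 P x * marg2 P y)"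
    using P by (rule umlaut_eq_0_iff)
  show "umlaut P < \<infinity> \<longleftrightarrow> (\<exists>y. \<forall>x. P (x, y) / marg1 P x > 0 \<or> marg1 P x = 0)"
    using umlaut_less_infinity_iff[OF P] cond_positive_iff[OF is_dist_nonneg[OF P]] by simp
next
  assume "is_dist R \<and> markov_chain R"
  then have "\<forall>t. 0 \<le> R t" "markov_chain R"
    by (simp_all add: is_dist_nonneg)
  then show "umlaut (margXZ R) \<le> umlaut (margXY R)" "umlaut (margXZ R) \<le> umlaut (margYZ R)"
    by (rule umlaut_margXZ_le_margXY umlaut_margXZ_le_margYZ)+
qed

end
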